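(* Let $m\in\mathbb{Z}_{>0}$ and $X=\{\bot\}\cup\{a_{ij}:i\in\{1,2,3,4\},j\in\{1,\dots,m\}\}$. Let $\mu_X$ be the distribution on $X$ with mass $1/2$ on $\bot$ and mass $1/(8m)$ on each $a_{ij}$. For $h\in\{-1,1\}^m$ define $s_h:X\to[-1,1]$ by $s_h(\bot)=1$, $s_h(a_{1j})=(h_j+2)/3$, $s_h(a_{2j})=(-h_j+2)/3$, $s_h(a_{3j})=(h_j-2)/3$, $s_h(a_{4j})=(-h_j-2)/3$. For $p,r\in\{-1,1\}^m$ define $b_{p,r}:X\to[-1,1]$ by $b_{p,r}(\bot)=0$, $b_{p,r}(a_{1j})=r_j$, $b_{p,r}(a_{2j})=p_j$, $b_{p,r}(a_{3j})=-r_j$, $b_{p,r}(a_{4j})=-p_j$. Let $S=\{s_h:h\in\{-1,1\}^m\}$ and $B=\{b_{p,r}:p,r\in\{-1,1\}^m\}$. Then for every $\varepsilon,\delta\in(0,1/2)$, $\#\mathsf{MC}^{\mu_X}(B,S,\varepsilon,\delta)\le O(\varepsilon^{-2}\log(1/\delta))$, and for every $\varepsilon\in(0,1/28)$ and $\delta\in(0,1/2)$, $\#\mathsf{MC}^{\mu_X}(S,B,\varepsilon,\delta)\ge(1-28\varepsilon)m$.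
   Context: For total classes $S,B\subseteq[-1,1]^X$, a distribution $\mu$ on $X\times[-1,1]$ and a model $f:X\to[-1,1]$ with countable range $V$, $\mathsf{MC\text{-}error}_{\mu,B}(f)=\sup_{b\in B}\sum_{v\in V}\big|\mathbb{E}_\mu[(f(x)-y)\mathbf{1}(f(x)=v)b(x)]\big|$. Distribution-specific realizable multicalibration $\mathsf{MC}^{\mu_X}_n(S,B,\varepsilon,\delta)$: (possibly randomized) learners taking $n$ points of $X\times[-1,1]$ and outputting $f:X\to[-1,1]$ (countable range) such that for every distribution $\mu$ on $X\times[-1,1]$ with $\mu|_X=\mu_X$ and $\mathbb{E}_\mu[y|x]=s(x)$ for some $s\in S$, with probability $\ge1-\delta$ over $n$ i.i.d. samples, $\mathsf{MC\text{-}error}_{\mu,B}(f)\le\varepsilon$. $\#\mathsf{MC}^{\mu_X}$ is the least such $n$; $\log$ base 2. *)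

theory Defs
  imports "HOL-Probability.Probability"
begin

text \<open>Points of the (ambient, countable) type. The actual domain X is a finite subset
  Xs of this type; a distribution mu_X on X is given by its point masses w.\<close>

datatype pt = Bot | A nat nat

type_synonym model = "pt \<Rightarrow> real"

definition MC_error :: "(pt \<times> real) measure \<Rightarrow> pt set \<Rightarrow> model set \<Rightarrow> model \<Rightarrow> real" where
  "MC_error M Xs B f =
     (SUP b\<in>B. \<Sum>v\<in>f ` Xs.
        \<bar>\<integral>z. (f (fst z) - snd z) * indicator {v} (f (fst z)) * b (fst z) \<partial>M\<bar>)"

text \<open>M is a distribution on X x [-1,1] with X-marginal given by point masses w and
  E[y | x] = s(x) for some s in S (conditional expectation on the countable set X,
  which is only constrained where w x > 0).\<close>
definition realizable_dist :: "pt set \<Rightarrow> (pt \<Rightarrow> real) \<Rightarrow> model set \<Rightarrow> (pt \<times> real) measure \<Rightarrow> bool" where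
  "realizable_dist Xs w S M \<longleftrightarrow>
     prob_space M \<and>
     sets M = sets (count_space UNIV \<Otimes>\<^sub>M borel) \<and>
     (AE z in M. fst z \<in> Xs \<and> snd z \<in> {-1..1}) \<and>
     (\<forall>x. measure M ({x} \<times> UNIV) = w x) \<and>
     (\<exists>s\<in>S. \<forall>x. (\<integral>z. snd z * indicator {x} (fst z) \<partial>M) = s x * w x)"

text \<open>Inner probability (avoids measurability requirements on the success event).\<close>
definition inner_prob :: "'a measure \<Rightarrow> 'a set \<Rightarrow> ennreal" where
  "inner_prob N E = (SUP C\<in>{C\<in>sets N. C \<subseteq> E}. emeasure N C)"

definition MC_learner ::
  "pt set \<Rightarrow> (pt \<Rightarrow> real) \<Rightarrow> model set \<Rightarrow> model set \<Rightarrow> real \<Rightarrow> real \<Rightarrow> nat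
     \<Rightarrow> ((pt \<times> real) list \<Rightarrow> model measure) \<Rightarrow> bool" where
  "MC_learner Xs w S B \<epsilon> \<delta> n L \<longleftrightarrow>
     (\<forall>D. prob_space (L D) \<and>
          (\<forall>f\<in>space (L D). (\<forall>x\<in>Xs. f x \<in> {-1..1}) \<and> countable (f ` Xs))) \<and>
     (\<forall>M. realizable_dist Xs w S M \<longrightarrow>
          (\<integral>\<^sup>+ smp. inner_prob (L (map smp [0..<n])) {f. MC_error M Xs B f \<le> \<epsilon>}
              \<partial>(PiM {..<n} (\<lambda>_. M))) \<ge> ennreal (1 - \<delta>))"

definition MC_learnable ::
  "pt set \<Rightarrow> (pt \<Rightarrow> real) \<Rightarrow> model set \<Rightarrow> model set \<Rightarrow> real \<Rightarrow> real \<Rightarrow> nat \<Rightarrow> bool" where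
  "MC_learnable Xs w S B \<epsilon> \<delta> n \<longleftrightarrow> (\<exists>L. MC_learner Xs w S B \<epsilon> \<delta> n L)"

text \<open>Sample complexity; infinity if no n works.\<close>
definition numMC ::
  "pt set \<Rightarrow> (pt \<Rightarrow> real) \<Rightarrow> model set \<Rightarrow> model set \<Rightarrow> real \<Rightarrow> real \<Rightarrow> enat" where
  "numMC Xs w S B \<epsilon> \<delta> = (INF n\<in>{n. MC_learnable Xs w S B \<epsilon> \<delta> n}. enat n)"

definition Xset :: "nat \<Rightarrow> pt set" where
  "Xset m = insert Bot {A i j | i j. i \<in> {1..4} \<and> j \<in> {1..m}}"

definition muX :: "nat \<Rightarrow> pt \<Rightarrow> real" where
  "muX m x = (case x of Bot \<Rightarrow> 1/2
     | A i j \<Rightarrow> if i \<in> {1..4} \<and> j \<in> {1..m} then 1 / (8 * real m) else 0)"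

definition sfun :: "nat \<Rightarrow> (nat \<Rightarrow> real) \<Rightarrow> model" where
  "sfun m h x = (case x of Bot \<Rightarrow> 1
     | A i j \<Rightarrow> if j \<in> {1..m} then
         (if i = 1 then (h j + 2) / 3 else if i = 2 then (- h j + 2) / 3
          else if i = 3 then (h j - 2) / 3 else if i = 4 then (- h j - 2) / 3 else 0)
       else 0)"

definition bfun :: "nat \<Rightarrow> (nat \<Rightarrow> real) \<Rightarrow> (nat \<Rightarrow> real) \<Rightarrow> model" where
  "bfun m p r x = (case x of Bot \<Rightarrow> 0
     | A i j \<Rightarrow> if j \<in> {1..m} then
         (if i = 1 then r j else if i = 2 then p j
          else if i = 3 then - r j else if i = 4 then - p j else 0)
       else 0)"

definition Sfam :: "nat \<Rightarrow> model set" where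
  "Sfam m = {sfun m h | h. h \<in> {1..m} \<rightarrow>\<^sub>E {-1, 1}}"

definition Bfam :: "nat \<Rightarrow> model set" where
  "Bfam m = {bfun m p r | p r. p \<in> {1..m} \<rightarrow>\<^sub>E {-1, 1} \<and> r \<in> {1..m} \<rightarrow>\<^sub>E {-1, 1}}"

end

theory Submission
  imports Defs
begin

(* Upper bound (labels realizable by B, audited by S).  Every s_h has mean 1/2 under mu_X, and
   when E[y | x] = b_{p,r}(x) one has E[y s_h(x)] = (2/3) E[y phi(x)] for every h, where phi
   (block_sign below) is +1 on the a_1j, a_2j and -1 on the a_3j, a_4j.  Hence a constant
   predictor v has error |v/2 - (2/3) E[y phi(x)]| against all of S, and it suffices to estimate
   the single number E[y phi(x)] to accuracy 3 eps/2; Hoeffding's inequality does this with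
   O(eps^-2 log(1/delta)) samples.

   Lower bound (labels realizable by S, audited by B).  Label x deterministically by s_h.  Since the
   auditor b_{p,r} chooses the signs r_j and p_j block by block, the error of any f is at least
   1/(8m) times the sum over the blocks j of a gain (built from audit_gap below), and the gains of
   f for h and for h flipped at j add up to at least 4/3.  A sample of size n < (1 - 28 eps) m
   misses more than 12 eps m blocks; flipping h on all of them leaves the sample unchanged while no
   f is eps-good for both labellings.  So, averaged over h, the learner succeeds with probability
   at most 1/2 < 1 - delta. *)

instance pt :: countable
  by countable_datatype

lemma nn_integral_distr_le:
  assumes T: "T \<in> measurable M N"
  shows "(\<integral>\<^sup>+y. F y \<partial>distr M N T) \<le> (\<integral>\<^sup>+x. F (T x) \<partial>M)"
  unfolding nn_integral_def[of "distr M N T"]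
proof (rule SUP_least)
  fix g assume "g \<in> {g. simple_function (distr M N T) g \<and> g \<le> F}"
  then have sf: "simple_function (distr M N T) g" and le: "g \<le> F" by auto
  have "integral\<^sup>S (distr M N T) g = (\<integral>\<^sup>+x. g (T x) \<partial>M)"
    by (simp add: nn_integral_eq_simple_integral[OF sf, symmetric]
        nn_integral_distr[OF T borel_measurable_simple_function[OF sf]])
  also have "\<dots> \<le> (\<integral>\<^sup>+x. F (T x) \<partial>M)"
    using le by (intro nn_integral_mono) (auto simp: le_fun_def)
  finally show "integral\<^sup>S (distr M N T) g \<le> (\<integral>\<^sup>+x. F (T x) \<partial>M)" .
qed

lemma inner_prob_add_disjoint_le_1:
  assumes P: "prob_space P" and disj: "E1 \<inter> E2 \<inter> space P = {}"
  shows "inner_prob P E1 + inner_prob P E2 \<le> 1"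
proof -
  have ne1: "{C \<in> sets P. C \<subseteq> E1} \<noteq> {}" and ne2: "{C \<in> sets P. C \<subseteq> E2} \<noteq> {}" by auto
  have "inner_prob P E1 + inner_prob P E2 =
      (SUP C1\<in>{C \<in> sets P. C \<subseteq> E1}. SUP C2\<in>{C \<in> sets P. C \<subseteq> E2}. emeasure P C1 + emeasure P C2)"
    unfolding inner_prob_def
    by (subst ennreal_SUP_add_left[OF ne1, symmetric]) (simp add: ennreal_SUP_add_right[OF ne2])
  also have "\<dots> \<le> 1"
  proof (intro SUP_least)
    fix C1 C2 assume C1: "C1 \<in> {C \<in> sets P. C \<subseteq> E1}" and C2: "C2 \<in> {C \<in> sets P. C \<subseteq> E2}"
    then have "C1 \<inter> C2 = {}" using disj sets.sets_into_space[of C1 P] by auto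
    then have "emeasure P C1 + emeasure P C2 = emeasure P (C1 \<union> C2)"
      using C1 C2 by (intro plus_emeasure) auto
    also have "\<dots> \<le> 1" using prob_space.emeasure_le_1[OF P] by simp
    finally show "emeasure P C1 + emeasure P C2 \<le> 1" .
  qed
  finally show ?thesis .
qed

lemma inner_prob_return_count_space:
  assumes "f \<in> E"
  shows "inner_prob (return (count_space {f}) f) E = 1"
proof (rule antisym)
  show "inner_prob (return (count_space {f}) f) E \<le> 1"
    unfolding inner_prob_def
    by (intro SUP_least prob_space.emeasure_le_1 prob_space_return) simp
  have "{f} \<in> {C \<in> sets (return (count_space {f}) f). C \<subseteq> E}"
    using assms by simp
  then show "1 \<le> inner_prob (return (count_space {f}) f) E"
    unfolding inner_prob_def by (rule SUP_upper2) simp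
qed

lemma measurable_PiM_measure_pmf:
  fixes Q :: "'a::countable pmf"
  assumes "finite I"
  shows "F \<in> measurable (PiM I (\<lambda>_. measure_pmf Q)) N \<longleftrightarrow> F \<in> PiE I (\<lambda>_. UNIV) \<rightarrow> space N"
proof -
  have "sets (PiM I (\<lambda>_. measure_pmf Q)) = sets (PiM I (\<lambda>_. count_space UNIV))"
    by (intro sets_PiM_cong) auto
  also have "PiM I (\<lambda>_. count_space UNIV) = count_space (PiE I (\<lambda>_. UNIV :: 'a set))"
    using assms by (intro count_space_PiM_finite) auto
  finally have "measurable (PiM I (\<lambda>_. measure_pmf Q)) N = measurable (count_space (PiE I (\<lambda>_. UNIV))) N"
    by (rule measurable_cong_sets) simp
  then show ?thesis by (simp only: measurable_count_space_eq1)
qed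

lemma indep_vars_PiM_coordinates:
  assumes M: "prob_space M" and I: "I \<noteq> {}"
  shows "prob_space.indep_vars (PiM I (\<lambda>_. M)) (\<lambda>_. M) (\<lambda>i \<omega>. \<omega> i) I"
proof -
  interpret PS: prob_space "PiM I (\<lambda>_. M)" by (intro prob_space_PiM M)
  have "distr (PiM I (\<lambda>_. M)) (PiM I (\<lambda>_. M)) (\<lambda>x. restrict x I) =
        distr (PiM I (\<lambda>_. M)) (PiM I (\<lambda>_. M)) (\<lambda>x. x)"
    by (rule distr_cong) (auto simp: space_PiM PiE_def extensional_restrict)
  also have "\<dots> = PiM I (\<lambda>i. distr (PiM I (\<lambda>_. M)) M (\<lambda>\<omega>. \<omega> i))"
    by (simp, rule PiM_cong) (auto intro!: distr_PiM_component[symmetric] M)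
  finally show ?thesis
    by (subst PS.indep_vars_iff_distr_eq_PiM'[OF I]) auto
qed

lemma prob_sample_mean_deviation:
  assumes M: "prob_space M" and Y: "Y \<in> borel_measurable M" and Y_range: "\<And>z. Y z \<in> {-1..1}"
    and n: "n > 0" and t: "0 \<le> t"
  shows "measure (PiM {..<n} (\<lambda>_. M))
           {\<omega> \<in> space (PiM {..<n} (\<lambda>_. M)). t \<le> \<bar>(\<Sum>k<n. Y (\<omega> k)) / n - (\<integral>z. Y z \<partial>M)\<bar>}
         \<le> 2 * exp (- real n * t\<^sup>2 / 2)"
proof -
  define \<Omega> where "\<Omega> = PiM {..<n} (\<lambda>_. M)"
  define X where "X = (\<lambda>k (\<omega> :: nat \<Rightarrow> _). Y (\<omega> k))"
  interpret PS: prob_space \<Omega> unfolding \<Omega>_def by (intro prob_space_PiM M)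
  have indep: "PS.indep_vars (\<lambda>_. borel) X {..<n}"
    using PS.indep_vars_compose2[of "\<lambda>_. M" "\<lambda>i \<omega>. \<omega> i" "{..<n}" "\<lambda>_. Y" "\<lambda>_. borel"]
      indep_vars_PiM_coordinates[OF M, of "{..<n}"] Y n
    by (auto simp: X_def \<Omega>_def lessThan_empty_iff)
  have expectation_X: "PS.expectation (X k) = (\<integral>z. Y z \<partial>M)" if "k < n" for k
  proof -
    have "PS.expectation (X k) = (\<integral>z. Y z \<partial>distr \<Omega> M (\<lambda>\<omega>. \<omega> k))"
      unfolding X_def \<Omega>_def by (rule integral_distr[symmetric]) (use that Y in auto)
    also have "distr \<Omega> M (\<lambda>\<omega>. \<omega> k) = M"
      unfolding \<Omega>_def by (rule distr_PiM_component) (use M that in auto)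
    finally show ?thesis .
  qed
  interpret H: Hoeffding_ineq \<Omega> "{..<n}" X "\<lambda>_. -1" "\<lambda>_. 1" "real n * (\<integral>z. Y z \<partial>M)"
  proof unfold_locales
    show "real n * (\<integral>z. Y z \<partial>M) \<equiv> \<Sum>k<n. PS.expectation (X k)"
      using expectation_X by simp
  qed (use indep Y_range in \<open>simp_all add: X_def\<close>)
  have "{\<omega> \<in> space \<Omega>. t \<le> \<bar>(\<Sum>k<n. Y (\<omega> k)) / n - (\<integral>z. Y z \<partial>M)\<bar>} =
        {\<omega> \<in> space \<Omega>. real n * t \<le> \<bar>(\<Sum>k<n. X k \<omega>) - real n * (\<integral>z. Y z \<partial>M)\<bar>}"
    using n by (auto simp: X_def field_simps abs_mult_pos' simp flip: abs_mult)
  also have "PS.prob \<dots> \<le> 2 * exp (-2 * (real n * t)\<^sup>2 / (\<Sum>k<n. (1 - (-1::real))\<^sup>2))"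
    by (rule H.Hoeffding_ineq_abs_ge) (use t n in auto)
  also have "\<dots> = 2 * exp (- real n * t\<^sup>2 / 2)"
    using n by (simp add: power2_eq_square)
  finally show ?thesis by (simp add: \<Omega>_def)
qed

lemma hoeffding_exponent_le:
  fixes \<epsilon> \<delta> :: real
  assumes \<epsilon>: "\<epsilon> > 0" and \<delta>: "0 < \<delta>" "\<delta> < 1/2"
    and n: "real n \<ge> 2 / \<epsilon>^2 * log 2 (1 / \<delta>)"
  shows "2 * exp (- real n * (3/2 * \<epsilon>)\<^sup>2 / 2) \<le> \<delta>"
proof -
  have ln_pos: "ln (1/\<delta>) > 0" using \<delta> by simp
  have "log 2 (1/\<delta>) \<ge> ln (1/\<delta>)"
    using ln_pos ln_le_minus_one[of 2] by (simp add: log_def field_simps)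
  then have "real n * \<epsilon>^2 \<ge> 2 * ln (1/\<delta>)" using n \<epsilon> by (simp add: field_simps)
  then have "- real n * (3/2 * \<epsilon>)\<^sup>2 / 2 \<le> - 2 * ln (1/\<delta>)"
    using ln_pos by (simp add: power2_eq_square)
  also have "\<dots> = ln (\<delta>^2)" using \<delta> by (simp add: ln_div ln_realpow)
  finally have "exp (- real n * (3/2 * \<epsilon>)\<^sup>2 / 2) \<le> \<delta>^2"
    using \<delta> by (metis exp_le_cancel_iff exp_ln zero_less_power)
  moreover have "2 * \<delta>^2 \<le> \<delta>"
    using mult_left_mono[of "2 * \<delta>" 1 \<delta>] \<delta> by (simp add: power2_eq_square mult_ac)
  ultimately show ?thesis by linarith
qed

lemma realizable_dist_witness:
  "realizable_dist Xs w S M \<Longrightarrow> \<exists>s\<in>S. realizable_dist Xs w {s} M"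
  by (auto simp: realizable_dist_def)

lemma integral_residual_realizable:
  assumes M: "realizable_dist Xs w {s} M" and Xs: "finite Xs"
  shows "(\<integral>z. (f (fst z) - snd z) * g (fst z) \<partial>M) = (\<Sum>x\<in>Xs. w x * ((f x - s x) * g x))"
proof -
  have P: "prob_space M" and sets_M [measurable_cong]: "sets M = sets (count_space UNIV \<Otimes>\<^sub>M borel)"
    and AE: "AE z in M. fst z \<in> Xs \<and> snd z \<in> {-1..1}"
    and marginal: "\<And>x. measure M ({x} \<times> UNIV) = w x"
    and cond_mean: "\<And>x. (\<integral>z. snd z * indicator {x} (fst z) \<partial>M) = s x * w x"
    using M unfolding realizable_dist_def by auto
  interpret prob_space M by (rule P)
  have space_M: "space M = UNIV"
    using sets_eq_imp_space_eq[OF sets_M] by (simp add: space_pair_measure)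
  have int_ind: "integrable M (\<lambda>z. indicator {x} (fst z) :: real)" for x
    by (rule integrable_const_bound[where B=1]) auto
  have int_snd_ind: "integrable M (\<lambda>z. snd z * indicator {x} (fst z))" for x
    by (rule integrable_const_bound[where B=1]) (use AE in \<open>auto simp: indicator_def\<close>)
  have fiber: "(\<integral>z. indicator {x} (fst z) \<partial>M) = w x" for x
  proof -
    have "(\<integral>z. indicator {x} (fst z) \<partial>M) = (\<integral>z. (indicator ({x} \<times> UNIV) z :: real) \<partial>M)"
      by (intro Bochner_Integration.integral_cong) (auto simp: indicator_def)
    also have "\<dots> = w x" by (simp add: space_M marginal)
    finally show ?thesis .
  qed
  have sum_fiber: "(\<Sum>x\<in>Xs. f x * g x * indicator {x} y - g x * (t * indicator {x} y)) = (f y - t) * g y"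
    if "y \<in> Xs" for y t
  proof -
    have "(\<Sum>x\<in>Xs. f x * g x * indicator {x} y - g x * (t * indicator {x} y))
        = (\<Sum>x\<in>Xs. if x = y then (f x - t) * g x else 0)"
      by (intro sum.cong) (auto simp: indicator_def algebra_simps)
    then show ?thesis using that Xs by simp
  qed
  have "(\<integral>z. (f (fst z) - snd z) * g (fst z) \<partial>M) =
        (\<integral>z. (\<Sum>x\<in>Xs. f x * g x * indicator {x} (fst z) - g x * (snd z * indicator {x} (fst z))) \<partial>M)"
    by (rule integral_cong_AE) (use AE sum_fiber in \<open>auto elim!: eventually_mono\<close>)
  also have "\<dots> = (\<Sum>x\<in>Xs. f x * g x * w x - g x * (s x * w x))"
    by (simp add: int_ind int_snd_ind fiber cond_mean)
  finally show ?thesis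
    by (simp add: algebra_simps)
qed

lemma integral_snd_realizable:
  assumes "realizable_dist Xs w {s} M" "finite Xs"
  shows "(\<integral>z. snd z * g (fst z) \<partial>M) = (\<Sum>x\<in>Xs. w x * (s x * g x))"
  using integral_residual_realizable[OF assms, of "\<lambda>_. 0" g] by (simp add: sum_negf)

lemma MC_error_realizable:
  assumes "realizable_dist Xs w {s} M" "finite Xs"
  shows "MC_error M Xs B f =
    (SUP b\<in>B. \<Sum>v\<in>f ` Xs. \<bar>\<Sum>x\<in>Xs. w x * ((f x - s x) * indicator {v} (f x) * b x)\<bar>)"
  unfolding MC_error_def
  using integral_residual_realizable[OF assms, of f "\<lambda>x. indicator _ (f x) * _ x"]
  by (simp add: mult.assoc)

definition label_dist :: "'a pmf \<Rightarrow> ('a \<Rightarrow> real) \<Rightarrow> ('a \<times> real) measure" where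
  "label_dist P s = distr (measure_pmf P) (count_space UNIV \<Otimes>\<^sub>M borel) (\<lambda>x. (x, s x))"

lemma prob_space_label_dist: "prob_space (label_dist P s)"
  unfolding label_dist_def by (rule measure_pmf.prob_space_distr) (simp add: space_pair_measure)

lemma space_label_dist [simp]: "space (label_dist P s) = UNIV"
  by (simp add: label_dist_def space_pair_measure)

lemma realizable_label_dist:
  assumes "set_pmf P \<subseteq> Xs" "s \<in> S" "\<And>x. x \<in> Xs \<Longrightarrow> s x \<in> {-1..1}"
  shows "realizable_dist Xs (pmf P) S (label_dist P s)"
  unfolding realizable_dist_def
proof (intro conjI allI bexI)
  show "prob_space (label_dist P s)" by (rule prob_space_label_dist)
  show "sets (label_dist P s) = sets (count_space UNIV \<Otimes>\<^sub>M borel)"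
    by (simp add: label_dist_def)
  show "AE z in label_dist P s. fst z \<in> Xs \<and> snd z \<in> {-1..1}"
    unfolding label_dist_def
  proof (subst AE_distr_iff)
    have "{z \<in> space (count_space UNIV \<Otimes>\<^sub>M borel). fst z \<in> Xs \<and> snd z \<in> {-1..1::real}} = Xs \<times> {-1..1}"
      by (auto simp: space_pair_measure)
    then show "{z \<in> space (count_space UNIV \<Otimes>\<^sub>M borel). fst z \<in> Xs \<and> snd z \<in> {-1..1::real}}
        \<in> sets (count_space UNIV \<Otimes>\<^sub>M borel)"
      by simp
  qed (use assms in \<open>auto simp: AE_measure_pmf_iff space_pair_measure\<close>)
  fix x
  show "measure (label_dist P s) ({x} \<times> UNIV) = pmf P x"
    unfolding label_dist_def
    by (subst measure_distr) (auto simp: vimage_def measure_pmf_single space_pair_measure)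
  have "(\<integral>z. snd z * indicator {x} (fst z) \<partial>label_dist P s) = (\<integral>y. s y * indicator {x} y \<partial>measure_pmf P)"
    unfolding label_dist_def by (subst integral_distr) (auto simp: space_pair_measure)
  also have "\<dots> = (\<integral>y. s x * indicator {x} y \<partial>measure_pmf P)"
    by (intro Bochner_Integration.integral_cong) (auto simp: indicator_def)
  also have "\<dots> = s x * pmf P x"
    by (simp add: measure_pmf_single)
  finally show "(\<integral>z. snd z * indicator {x} (fst z) \<partial>label_dist P s) = s x * pmf P x" .
qed (use assms in auto)

lemma nn_integral_PiM_label_dist_le:
  fixes P :: "'a::countable pmf"
  shows "(\<integral>\<^sup>+\<omega>. F (map \<omega> [0..<n]) \<partial>PiM {..<n} (\<lambda>_. label_dist P s))
       \<le> (\<integral>\<^sup>+\<xi>. F (map (\<lambda>k. (\<xi> k, s (\<xi> k))) [0..<n]) \<partial>PiM {..<n} (\<lambda>_. measure_pmf P))"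
proof -
  let ?lab = "\<lambda>x. (x, s x)"
  have "distr (PiM {..<n} (\<lambda>_. measure_pmf P)) (PiM {..<n} (\<lambda>_. label_dist P s)) (compose {..<n} ?lab)
      = PiM {..<n} (\<lambda>_. distr (measure_pmf P) (label_dist P s) ?lab)"
    by (rule distr_PiM_finite_prob_space')
       (auto simp: label_dist_def space_pair_measure intro!: measure_pmf.prob_space_distr measure_pmf.prob_space_axioms)
  also have "(\<lambda>_. distr (measure_pmf P) (label_dist P s) ?lab) = (\<lambda>_. label_dist P s)"
    by (auto simp: label_dist_def intro!: distr_cong)
  finally have PiM_eq: "PiM {..<n} (\<lambda>_. label_dist P s)
      = distr (PiM {..<n} (\<lambda>_. measure_pmf P)) (PiM {..<n} (\<lambda>_. label_dist P s)) (compose {..<n} ?lab)"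
    by simp
  have "(\<integral>\<^sup>+\<omega>. F (map \<omega> [0..<n]) \<partial>PiM {..<n} (\<lambda>_. label_dist P s))
      \<le> (\<integral>\<^sup>+\<xi>. F (map (compose {..<n} ?lab \<xi>) [0..<n]) \<partial>PiM {..<n} (\<lambda>_. measure_pmf P))"
    by (subst PiM_eq, rule nn_integral_distr_le)
       (auto simp: measurable_PiM_measure_pmf space_PiM compose_def)
  also have "\<dots> = (\<integral>\<^sup>+\<xi>. F (map (\<lambda>k. (\<xi> k, s (\<xi> k))) [0..<n]) \<partial>PiM {..<n} (\<lambda>_. measure_pmf P))"
    by (intro nn_integral_cong arg_cong[where f=F] map_cong) (auto simp: compose_def)
  finally show ?thesis .
qed

lemma Xset_eq: "Xset m = insert Bot ((\<lambda>(i, j). A i j) ` ({1..4} \<times> {1..m}))"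
  unfolding Xset_def by auto

lemma finite_Xset [simp]: "finite (Xset m)"
  unfolding Xset_eq by auto

lemma sum_Xset:
  "(\<Sum>x\<in>Xset m. g x) = g Bot + (\<Sum>j\<in>{1..m}. g (A 1 j) + g (A 2 j) + g (A 3 j) + g (A 4 j))"
proof -
  have inj: "inj_on (\<lambda>(i, j). A i j) ({1..4} \<times> {1..m})" by (auto simp: inj_on_def)
  have "(\<Sum>x\<in>Xset m. g x) = g Bot + (\<Sum>x\<in>(\<lambda>(i, j). A i j) ` ({1..4} \<times> {1..m}). g x)"
    unfolding Xset_eq by (subst sum.insert) auto
  also have "(\<Sum>x\<in>(\<lambda>(i, j). A i j) ` ({1..4} \<times> {1..m}). g x) = (\<Sum>(i, j)\<in>{1..4} \<times> {1..m}. g (A i j))"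
    by (subst sum.reindex[OF inj]) (simp add: case_prod_beta')
  also have "(\<Sum>(i, j)\<in>{1..4} \<times> {1..m}. g (A i j)) = (\<Sum>j\<in>{1..m}. \<Sum>i\<in>{1..4}. g (A i j))"
    by (subst sum.swap) (simp add: sum.cartesian_product)
  also have "\<dots> = (\<Sum>j\<in>{1..m}. g (A 1 j) + g (A 2 j) + g (A 3 j) + g (A 4 j))"
    by (simp add: numeral_eq_Suc atLeastAtMostSuc_conv add_ac)
  finally show ?thesis .
qed

lemma muX_A: "i \<in> {1..4} \<Longrightarrow> j \<in> {1..m} \<Longrightarrow> muX m (A i j) = 1 / (8 * real m)"
  by (simp add: muX_def)

lemma muX_outside: "x \<notin> Xset m \<Longrightarrow> muX m x = 0"
  by (auto simp: muX_def Xset_def split: pt.splits)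

definition muX_pmf :: "nat \<Rightarrow> pt pmf" where
  "muX_pmf m = embed_pmf (muX m)"

lemma pmf_muX_pmf:
  assumes "m > 0"
  shows "pmf (muX_pmf m) = muX m"
proof -
  have nonneg: "0 \<le> muX m x" for x
    by (auto simp: muX_def split: pt.splits)
  have "(\<integral>\<^sup>+x. ennreal (muX m x) \<partial>count_space UNIV) = ennreal (\<Sum>x\<in>Xset m. muX m x)"
    by (subst nn_integral_count_space'[of "Xset m"]) (auto simp: muX_outside nonneg)
  also have "(\<Sum>x\<in>Xset m. muX m x) = 1"
    using assms by (simp add: sum_Xset muX_A) (simp add: muX_def)
  finally show ?thesis
    unfolding muX_pmf_def by (intro ext pmf_embed_pmf) (auto simp: nonneg)
qed

lemma set_pmf_muX_pmf: "m > 0 \<Longrightarrow> set_pmf (muX_pmf m) \<subseteq> Xset m"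
  using muX_outside by (auto simp: set_pmf_eq pmf_muX_pmf)

lemma sfun_range: "h \<in> {1..m} \<rightarrow>\<^sub>E {-1, 1} \<Longrightarrow> sfun m h x \<in> {-1..1}"
  by (auto simp: sfun_def split: pt.splits dest!: PiE_mem)

lemma finite_Bfam: "finite (Bfam m)"
proof -
  have "Bfam m = (\<lambda>(p, r). bfun m p r) ` (({1..m} \<rightarrow>\<^sub>E {-1, 1}) \<times> ({1..m} \<rightarrow>\<^sub>E {-1, 1}))"
    by (auto simp: Bfam_def)
  then show ?thesis by (simp add: finite_PiE)
qed

section \<open>Upper bound: a constant predictor\<close>

definition block_sign :: "nat \<Rightarrow> pt \<Rightarrow> real" where
  "block_sign m x = (case x of Bot \<Rightarrow> 0
     | A i j \<Rightarrow> if j \<in> {1..m} then (if i \<in> {1, 2} then 1 else if i \<in> {3, 4} then -1 else 0) else 0)"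

lemma sum_muX_sfun: "m > 0 \<Longrightarrow> (\<Sum>x\<in>Xset m. muX m x * sfun m h x) = 1/2"
  by (simp add: sum_Xset muX_A sfun_def) (simp add: muX_def field_simps)

lemma sum_muX_bfun_sfun:
  "(\<Sum>x\<in>Xset m. muX m x * (bfun m p r x * sfun m h x)) =
     2/3 * (\<Sum>x\<in>Xset m. muX m x * (bfun m p r x * block_sign m x))"
  by (simp add: sum_Xset sum_distrib_left bfun_def sfun_def block_sign_def muX_A, intro sum.cong refl)
     (simp add: field_simps)

lemma abs_sum_muX_bfun_block_sign_le:
  assumes m: "m > 0" and p: "p \<in> {1..m} \<rightarrow>\<^sub>E {-1, 1}" and r: "r \<in> {1..m} \<rightarrow>\<^sub>E {-1, 1}"
  shows "\<bar>\<Sum>x\<in>Xset m. muX m x * (bfun m p r x * block_sign m x)\<bar> \<le> 1/2"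
proof -
  have "(\<Sum>x\<in>Xset m. muX m x * (bfun m p r x * block_sign m x)) = (\<Sum>j\<in>{1..m}. (r j + p j) / (4 * real m))"
    unfolding sum_Xset
    by (simp add: bfun_def block_sign_def muX_A, intro sum.cong refl) (simp add: field_simps)
  also have "\<bar>\<dots>\<bar> \<le> (\<Sum>j\<in>{1..m}. 2 / (4 * real m))"
  proof (rule order.trans[OF sum_abs sum_mono])
    fix j assume "j \<in> {1..m}"
    then have "r j \<in> {-1, 1}" "p j \<in> {-1, 1}" using p r by auto
    then have "\<bar>r j + p j\<bar> \<le> 2" by auto
    then show "\<bar>(r j + p j) / (4 * real m)\<bar> \<le> 2 / (4 * real m)"
      using m by (simp add: field_simps)
  qed
  also have "\<dots> = 1/2" using m by simp
  finally show ?thesis .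
qed

lemma
  assumes m: "m > 0" and M: "realizable_dist (Xset m) (muX m) (Bfam m) M"
  shows abs_integral_block_sign_le: "\<bar>\<integral>z. snd z * block_sign m (fst z) \<partial>M\<bar> \<le> 1/2"
    and MC_error_constant_model: "MC_error M (Xset m) (Sfam m) (\<lambda>_. v) =
           \<bar>v/2 - 2/3 * (\<integral>z. snd z * block_sign m (fst z) \<partial>M)\<bar>"
proof -
  obtain b where "b \<in> Bfam m" and Mb: "realizable_dist (Xset m) (muX m) {b} M"
    using realizable_dist_witness[OF M] by blast
  then obtain p r where b: "b = bfun m p r"
    and p: "p \<in> {1..m} \<rightarrow>\<^sub>E {-1, 1}" and r: "r \<in> {1..m} \<rightarrow>\<^sub>E {-1, 1}"
    by (auto simp: Bfam_def)
  define E where "E = (\<integral>z. snd z * block_sign m (fst z) \<partial>M)"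
  have E_eq: "E = (\<Sum>x\<in>Xset m. muX m x * (bfun m p r x * block_sign m x))"
    unfolding E_def integral_snd_realizable[OF Mb finite_Xset] b ..
  then show "\<bar>\<integral>z. snd z * block_sign m (fst z) \<partial>M\<bar> \<le> 1/2"
    using abs_sum_muX_bfun_block_sign_le[OF m p r] by (simp add: E_def)
  have residual: "(\<Sum>x\<in>Xset m. muX m x * ((v - b x) * indicator {v} v * s x)) = v/2 - 2/3 * E"
    if "s \<in> Sfam m" for s
  proof -
    obtain h where s: "s = sfun m h" using \<open>s \<in> Sfam m\<close> by (auto simp: Sfam_def)
    have "(\<Sum>x\<in>Xset m. muX m x * ((v - b x) * indicator {v} v * s x)) =
        v * (\<Sum>x\<in>Xset m. muX m x * sfun m h x) - (\<Sum>x\<in>Xset m. muX m x * (bfun m p r x * sfun m h x))"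
      by (simp add: s b sum_distrib_left sum_subtractf algebra_simps)
    then show ?thesis
      by (simp add: sum_muX_sfun[OF m] sum_muX_bfun_sfun E_eq)
  qed
  have "sfun m (restrict (\<lambda>_. 1) {1..m}) \<in> Sfam m"
    by (auto simp: Sfam_def)
  then have "Sfam m \<noteq> {}" by blast
  have "(\<lambda>_. v) ` Xset m = {v}" by (auto simp: Xset_def)
  then have "MC_error M (Xset m) (Sfam m) (\<lambda>_. v) =
      (SUP s\<in>Sfam m. \<bar>\<Sum>x\<in>Xset m. muX m x * ((v - b x) * indicator {v} v * s x)\<bar>)"
    by (simp add: MC_error_realizable[OF Mb finite_Xset])
  also have "\<dots> = \<bar>v/2 - 2/3 * E\<bar>"
    using residual cSUP_const[OF \<open>Sfam m \<noteq> {}\<close>] by simp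
  finally show "MC_error M (Xset m) (Sfam m) (\<lambda>_. v) = \<bar>v/2 - 2/3 * (\<integral>z. snd z * block_sign m (fst z) \<partial>M)\<bar>"
    by (simp add: E_def)
qed

definition clip :: "real \<Rightarrow> real \<Rightarrow> real" where
  "clip c y = max (-c) (min c y)"

text \<open>The labels are clipped to [-1, 1] because they lie there only almost surely; the
  empirical mean is clipped to [-1/2, 1/2], which contains the quantity it estimates.\<close>
definition const_estimate :: "nat \<Rightarrow> nat \<Rightarrow> (pt \<times> real) list \<Rightarrow> real" where
  "const_estimate m n D = 4/3 * clip (1/2) ((\<Sum>(x, y)\<leftarrow>D. block_sign m x * clip 1 y) / n)"

definition const_learner :: "nat \<Rightarrow> nat \<Rightarrow> (pt \<times> real) list \<Rightarrow> model measure" where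
  "const_learner m n D = return (count_space {\<lambda>_. const_estimate m n D}) (\<lambda>_. const_estimate m n D)"

lemma MC_error_const_estimate_le:
  assumes m: "m > 0" and M: "realizable_dist (Xset m) (muX m) (Bfam m) M"
    and close: "\<bar>(\<Sum>(x, y)\<leftarrow>D. block_sign m x * clip 1 y) / n - (\<integral>z. snd z * block_sign m (fst z) \<partial>M)\<bar> < 3/2 * \<epsilon>"
  shows "MC_error M (Xset m) (Sfam m) (\<lambda>_. const_estimate m n D) \<le> \<epsilon>"
proof -
  define E where "E = (\<integral>z. snd z * block_sign m (fst z) \<partial>M)"
  define c where "c = (\<Sum>(x, y)\<leftarrow>D. block_sign m x * clip 1 y) / n"
  have "\<bar>clip (1/2) c - E\<bar> \<le> \<bar>c - E\<bar>"
    using abs_integral_block_sign_le[OF m M] by (auto simp: clip_def E_def)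
  then have "\<bar>4/3 * clip (1/2) c / 2 - 2/3 * E\<bar> \<le> \<epsilon>"
    using close unfolding E_def[symmetric] c_def[symmetric] by linarith
  then show ?thesis
    by (simp add: MC_error_constant_model[OF m M] const_estimate_def flip: E_def c_def)
qed

lemma emeasure_accurate_samples_ge:
  assumes M: "realizable_dist (Xset m) (muX m) (Bfam m) M"
    and \<epsilon>: "\<epsilon> > 0" and \<delta>: "0 < \<delta>" "\<delta> < 1/2" and n: "real n \<ge> 2 / \<epsilon>^2 * log 2 (1 / \<delta>)"
  defines "Good \<equiv> {\<omega> \<in> space (PiM {..<n} (\<lambda>_. M)).
     \<bar>(\<Sum>k<n. block_sign m (fst (\<omega> k)) * clip 1 (snd (\<omega> k))) / n - (\<integral>z. snd z * block_sign m (fst z) \<partial>M)\<bar>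
       < 3/2 * \<epsilon>}"
  shows "Good \<in> sets (PiM {..<n} (\<lambda>_. M))" and "ennreal (1 - \<delta>) \<le> emeasure (PiM {..<n} (\<lambda>_. M)) Good"
proof -
  have P: "prob_space M" and sets_M [measurable_cong]: "sets M = sets (count_space UNIV \<Otimes>\<^sub>M borel)"
    and AE: "AE z in M. fst z \<in> Xset m \<and> snd z \<in> {-1..1}"
    using M by (auto simp: realizable_dist_def)
  define Y where "Y z = block_sign m (fst z) * clip 1 (snd z)" for z
  define \<Omega> where "\<Omega> = PiM {..<n} (\<lambda>_. M)"
  interpret PS: prob_space \<Omega> unfolding \<Omega>_def by (intro prob_space_PiM P)
  have "2 / \<epsilon>^2 * log 2 (1 / \<delta>) > 0" using \<epsilon> \<delta> by simp
  then have n_pos: "n > 0" using n by linarith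
  have Y_meas [measurable]: "Y \<in> borel_measurable M"
    unfolding Y_def clip_def by measurable
  have Y_range: "Y z \<in> {-1..1}" for z
    by (auto simp: Y_def clip_def block_sign_def split: pt.splits)
  have Y_AE: "AE z in M. Y z = snd z * block_sign m (fst z)"
    using AE by eventually_elim (auto simp: Y_def clip_def)
  define E where "E = (\<integral>z. snd z * block_sign m (fst z) \<partial>M)"
  have "(\<integral>z. Y z \<partial>M) = E"
    unfolding E_def by (rule integral_cong_AE[OF Y_meas _ Y_AE]) measurable
  have Good_Y: "Good = {\<omega> \<in> space \<Omega>. \<bar>(\<Sum>k<n. Y (\<omega> k)) / n - E\<bar> < 3/2 * \<epsilon>}"
    by (simp add: Good_def Y_def E_def \<Omega>_def)
  then have "space \<Omega> - Good = {\<omega> \<in> space \<Omega>. 3/2 * \<epsilon> \<le> \<bar>(\<Sum>k<n. Y (\<omega> k)) / n - E\<bar>}"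
    by auto
  then have "PS.prob (space \<Omega> - Good) \<le> 2 * exp (- real n * (3/2 * \<epsilon>)\<^sup>2 / 2)"
    using prob_sample_mean_deviation[OF P Y_meas Y_range n_pos, of "3/2 * \<epsilon>"] \<epsilon> \<open>(\<integral>z. Y z \<partial>M) = E\<close>
    by (simp add: \<Omega>_def)
  also have "\<dots> \<le> \<delta>" by (rule hoeffding_exponent_le[OF \<epsilon> \<delta> n])
  finally have "PS.prob (space \<Omega> - Good) \<le> \<delta>" .
  moreover have Good_ev: "Good \<in> PS.events"
    unfolding Good_Y \<Omega>_def by measurable
  ultimately have "ennreal (1 - \<delta>) \<le> emeasure \<Omega> Good"
    using PS.prob_compl[OF Good_ev] by (simp add: PS.emeasure_eq_measure)
  with Good_ev show "Good \<in> sets (PiM {..<n} (\<lambda>_. M))"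
    and "ennreal (1 - \<delta>) \<le> emeasure (PiM {..<n} (\<lambda>_. M)) Good"
    by (simp_all add: \<Omega>_def)
qed

lemma MC_learner_const_learner:
  assumes m: "m > 0" and \<epsilon>: "\<epsilon> > 0" and \<delta>: "0 < \<delta>" "\<delta> < 1/2"
    and n: "real n \<ge> 2 / \<epsilon>^2 * log 2 (1 / \<delta>)"
  shows "MC_learner (Xset m) (muX m) (Bfam m) (Sfam m) \<epsilon> \<delta> n (const_learner m n)"
  unfolding MC_learner_def
proof (intro conjI allI impI)
  fix D
  show "prob_space (const_learner m n D)"
    unfolding const_learner_def by (rule prob_space_return) simp
  show "\<forall>f\<in>space (const_learner m n D). (\<forall>x\<in>Xset m. f x \<in> {-1..1}) \<and> countable (f ` Xset m)"
    by (auto simp: const_learner_def const_estimate_def clip_def intro: countable_finite)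
next
  fix M assume M: "realizable_dist (Xset m) (muX m) (Bfam m) M"
  define Good where "Good = {\<omega> \<in> space (PiM {..<n} (\<lambda>_. M)).
     \<bar>(\<Sum>k<n. block_sign m (fst (\<omega> k)) * clip 1 (snd (\<omega> k))) / n - (\<integral>z. snd z * block_sign m (fst z) \<partial>M)\<bar>
       < 3/2 * \<epsilon>}"
  note Good = emeasure_accurate_samples_ge[OF M \<epsilon> \<delta> n, folded Good_def]
  have "ennreal (1 - \<delta>) \<le> (\<integral>\<^sup>+\<omega>. indicator Good \<omega> \<partial>PiM {..<n} (\<lambda>_. M))"
    using Good by simp
  also have "\<dots> \<le> (\<integral>\<^sup>+\<omega>. inner_prob (const_learner m n (map \<omega> [0..<n]))
      {f. MC_error M (Xset m) (Sfam m) f \<le> \<epsilon>} \<partial>PiM {..<n} (\<lambda>_. M))"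
  proof (intro nn_integral_mono)
    fix \<omega>
    show "indicator Good \<omega> \<le> inner_prob (const_learner m n (map \<omega> [0..<n])) {f. MC_error M (Xset m) (Sfam m) f \<le> \<epsilon>}"
    proof (cases "\<omega> \<in> Good")
      case True
      have "(\<Sum>(x, y)\<leftarrow>map \<omega> [0..<n]. block_sign m x * clip 1 y) = (\<Sum>k<n. block_sign m (fst (\<omega> k)) * clip 1 (snd (\<omega> k)))"
        by (simp add: interv_sum_list_conv_sum_set_nat atLeast0LessThan case_prod_beta')
      then have "MC_error M (Xset m) (Sfam m) (\<lambda>_. const_estimate m n (map \<omega> [0..<n])) \<le> \<epsilon>"
        using True by (intro MC_error_const_estimate_le[OF m M]) (simp add: Good_def)
      then show ?thesis
        by (simp add: const_learner_def inner_prob_return_count_space indicator_def)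
    qed simp
  qed
  finally show "ennreal (1 - \<delta>) \<le> (\<integral>\<^sup>+\<omega>. inner_prob (const_learner m n (map \<omega> [0..<n]))
      {f. MC_error M (Xset m) (Sfam m) f \<le> \<epsilon>} \<partial>PiM {..<n} (\<lambda>_. M))" .
qed

section \<open>Lower bound: flipping the unseen blocks\<close>

definition sign_pm :: "real \<Rightarrow> real" where
  "sign_pm v = (if 0 \<le> v then 1 else -1)"

lemma sum_sign_pm_le_sum_level_sets:
  fixes f g :: "'a \<Rightarrow> real"
  assumes "finite X"
  shows "(\<Sum>x\<in>X. sign_pm (f x) * g x) \<le> (\<Sum>v\<in>f ` X. \<bar>\<Sum>x\<in>X. g x * indicator {v} (f x)\<bar>)"
proof -
  have "(\<Sum>x\<in>X. sign_pm (f x) * g x) = (\<Sum>x\<in>X. \<Sum>v\<in>f ` X. sign_pm v * (g x * indicator {v} (f x)))"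
  proof (intro sum.cong refl)
    fix x assume "x \<in> X"
    have "(\<Sum>v\<in>f ` X. sign_pm v * (g x * indicator {v} (f x))) = (\<Sum>v\<in>f ` X. if v = f x then sign_pm v * g x else 0)"
      by (intro sum.cong refl) (auto simp: indicator_def)
    then show "sign_pm (f x) * g x = (\<Sum>v\<in>f ` X. sign_pm v * (g x * indicator {v} (f x)))"
      using assms \<open>x \<in> X\<close> by simp
  qed
  also have "\<dots> = (\<Sum>v\<in>f ` X. sign_pm v * (\<Sum>x\<in>X. g x * indicator {v} (f x)))"
    by (subst sum.swap) (simp add: sum_distrib_left)
  also have "\<dots> \<le> (\<Sum>v\<in>f ` X. \<bar>\<Sum>x\<in>X. g x * indicator {v} (f x)\<bar>)"
    by (intro sum_mono) (simp add: sign_pm_def abs_ge_self abs_ge_minus_self)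
  finally show ?thesis .
qed

definition audit_gap :: "nat \<Rightarrow> model \<Rightarrow> (nat \<Rightarrow> real) \<Rightarrow> nat \<Rightarrow> nat \<Rightarrow> nat \<Rightarrow> real" where
  "audit_gap m f h i k j =
     sign_pm (f (A i j)) * (f (A i j) - sfun m h (A i j)) - sign_pm (f (A k j)) * (f (A k j) - sfun m h (A k j))"

lemma sum_muX_signed_residual_bfun:
  "(\<Sum>x\<in>Xset m. muX m x * (sign_pm (f x) * (f x - sfun m h x) * bfun m p r x)) =
     (\<Sum>j\<in>{1..m}. r j * audit_gap m f h 1 3 j + p j * audit_gap m f h 2 4 j) / (8 * real m)"
  unfolding sum_Xset sum_divide_distrib
  by (simp add: bfun_def muX_A audit_gap_def, intro sum.cong refl) (simp add: field_simps)

lemma MC_error_label_dist_ge_audit_gap: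
  assumes m: "m > 0" and h: "h \<in> {1..m} \<rightarrow>\<^sub>E {-1, 1}"
  shows "(\<Sum>j\<in>{1..m}. \<bar>audit_gap m f h 1 3 j\<bar> + \<bar>audit_gap m f h 2 4 j\<bar>) / (8 * real m)
       \<le> MC_error (label_dist (muX_pmf m) (sfun m h)) (Xset m) (Bfam m) f"
proof -
  define r where "r = restrict (\<lambda>j. sign_pm (audit_gap m f h 1 3 j)) {1..m}"
  define p where "p = restrict (\<lambda>j. sign_pm (audit_gap m f h 2 4 j)) {1..m}"
  have b: "bfun m p r \<in> Bfam m"
    unfolding Bfam_def by (intro CollectI exI[of _ p] exI[of _ r]) (auto simp: p_def r_def sign_pm_def)
  have M: "realizable_dist (Xset m) (muX m) {sfun m h} (label_dist (muX_pmf m) (sfun m h))"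
    using realizable_label_dist[OF set_pmf_muX_pmf[OF m], of "sfun m h"] sfun_range[OF h]
    by (simp add: pmf_muX_pmf[OF m])
  have "(\<Sum>j\<in>{1..m}. \<bar>audit_gap m f h 1 3 j\<bar> + \<bar>audit_gap m f h 2 4 j\<bar>) / (8 * real m)
      = (\<Sum>x\<in>Xset m. muX m x * (sign_pm (f x) * (f x - sfun m h x) * bfun m p r x))"
    unfolding sum_muX_signed_residual_bfun
    by (intro arg_cong[where f="\<lambda>t. t / (8 * real m)"] sum.cong refl) (simp add: p_def r_def sign_pm_def)
  also have "\<dots> \<le> (\<Sum>v\<in>f ` Xset m. \<bar>\<Sum>x\<in>Xset m. muX m x * ((f x - sfun m h x) * indicator {v} (f x) * bfun m p r x)\<bar>)"
    using sum_sign_pm_le_sum_level_sets[of "Xset m" f "\<lambda>x. muX m x * (f x - sfun m h x) * bfun m p r x"]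
    by (simp add: mult_ac)
  also have "\<dots> \<le> MC_error (label_dist (muX_pmf m) (sfun m h)) (Xset m) (Bfam m) f"
    unfolding MC_error_realizable[OF M finite_Xset]
    by (rule cSUP_upper[OF b]) (intro bdd_above_finite finite_imageI finite_Bfam)
  finally show ?thesis .
qed

text \<open>If a1 and a3 have the same sign then |a1 - a3| \<le> 1 while the two targets are 4/3 apart,
  so each term is at least 1/3; otherwise the expressions inside the two absolute values differ
  by 4/3.\<close>
lemma abs_gap_flip_ge:
  fixes a1 a3 t :: real
  assumes "a1 \<in> {-1..1}" "a3 \<in> {-1..1}" "t \<in> {-1, 1}"
  shows "2/3 \<le> \<bar>sign_pm a1 * (a1 - (t + 2) / 3) - sign_pm a3 * (a3 - (t - 2) / 3)\<bar>
              + \<bar>sign_pm a1 * (a1 - (- t + 2) / 3) - sign_pm a3 * (a3 - (- t - 2) / 3)\<bar>"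
  using assms by (auto simp: sign_pm_def abs_if)

definition flip_on :: "nat set \<Rightarrow> (nat \<Rightarrow> real) \<Rightarrow> nat \<Rightarrow> real" where
  "flip_on T h j = (if j \<in> T then - h j else h j)"

lemma flip_on_PiE: "h \<in> {1..m} \<rightarrow>\<^sub>E {-1, 1} \<Longrightarrow> T \<subseteq> {1..m} \<Longrightarrow> flip_on T h \<in> {1..m} \<rightarrow>\<^sub>E {-1, 1}"
  by (auto simp: flip_on_def PiE_iff extensional_def)

lemma flip_on_flip_on [simp]: "flip_on T (flip_on T h) = h"
  by (auto simp: flip_on_def)

lemma audit_gap_flip_on_ge:
  assumes j: "j \<in> T" and T: "T \<subseteq> {1..m}" and h: "h j \<in> {-1, 1}" and f: "\<forall>x\<in>Xset m. f x \<in> {-1..1}"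
  shows "4/3 \<le> (\<bar>audit_gap m f h 1 3 j\<bar> + \<bar>audit_gap m f h 2 4 j\<bar>)
              + (\<bar>audit_gap m f (flip_on T h) 1 3 j\<bar> + \<bar>audit_gap m f (flip_on T h) 2 4 j\<bar>)"
proof -
  have jm: "j \<in> {1..m}" using j T by auto
  have fA: "f (A i j) \<in> {-1..1}" if "i \<in> {1..4}" for i
    using f that jm by (auto simp: Xset_def)
  have "- h j \<in> {-1, 1}" using h by auto
  have "2/3 \<le> \<bar>audit_gap m f h 1 3 j\<bar> + \<bar>audit_gap m f (flip_on T h) 1 3 j\<bar>"
    using abs_gap_flip_ge[OF fA fA h, of 1 3] j jm
    by (simp add: audit_gap_def sfun_def flip_on_def)
  moreover have "2/3 \<le> \<bar>audit_gap m f h 2 4 j\<bar> + \<bar>audit_gap m f (flip_on T h) 2 4 j\<bar>"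
    using abs_gap_flip_ge[OF fA fA \<open>- h j \<in> {-1, 1}\<close>, of 2 4] j jm
    by (simp add: audit_gap_def sfun_def flip_on_def)
  ultimately show ?thesis by linarith
qed

lemma MC_error_flip_on_not_both_le:
  assumes m: "m > 0" and h: "h \<in> {1..m} \<rightarrow>\<^sub>E {-1, 1}" and T: "T \<subseteq> {1..m}"
    and f: "\<forall>x\<in>Xset m. f x \<in> {-1..1}" and card_T: "12 * \<epsilon> * real m < real (card T)"
  shows "\<not> (MC_error (label_dist (muX_pmf m) (sfun m h)) (Xset m) (Bfam m) f \<le> \<epsilon> \<and>
            MC_error (label_dist (muX_pmf m) (sfun m (flip_on T h))) (Xset m) (Bfam m) f \<le> \<epsilon>)"
proof
  define gain where "gain h' j = \<bar>audit_gap m f h' 1 3 j\<bar> + \<bar>audit_gap m f h' 2 4 j\<bar>" for h' j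
  assume "MC_error (label_dist (muX_pmf m) (sfun m h)) (Xset m) (Bfam m) f \<le> \<epsilon> \<and>
          MC_error (label_dist (muX_pmf m) (sfun m (flip_on T h))) (Xset m) (Bfam m) f \<le> \<epsilon>"
  then have "(\<Sum>j\<in>{1..m}. gain h j) / (8 * real m) \<le> \<epsilon>"
    and "(\<Sum>j\<in>{1..m}. gain (flip_on T h) j) / (8 * real m) \<le> \<epsilon>"
    using MC_error_label_dist_ge_audit_gap[OF m h, of f]
      MC_error_label_dist_ge_audit_gap[OF m flip_on_PiE[OF h T], of f]
    unfolding gain_def by linarith+
  moreover have "real (card T) * (4/3) \<le> (\<Sum>j\<in>{1..m}. gain h j) + (\<Sum>j\<in>{1..m}. gain (flip_on T h) j)"
  proof -
    have "real (card T) * (4/3) = (\<Sum>j\<in>T. 4/3)" by simp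
    also have "\<dots> \<le> (\<Sum>j\<in>T. gain h j + gain (flip_on T h) j)"
      using audit_gap_flip_on_ge[OF _ T _ f] h T
      by (intro sum_mono) (auto simp: gain_def)
    also have "\<dots> \<le> (\<Sum>j\<in>{1..m}. gain h j + gain (flip_on T h) j)"
      using T by (intro sum_mono2) (auto simp: gain_def)
    finally show ?thesis by (simp add: sum.distrib)
  qed
  ultimately show False
    using card_T m by (simp add: field_simps)
qed

lemma sum_le_card_if_involution:
  fixes G :: "'a \<Rightarrow> ennreal"
  assumes H: "finite H" and \<sigma>: "\<And>h. h \<in> H \<Longrightarrow> \<sigma> h \<in> H" "\<And>h. h \<in> H \<Longrightarrow> \<sigma> (\<sigma> h) = h"
    and pair: "\<And>h. h \<in> H \<Longrightarrow> G h + G (\<sigma> h) \<le> 1"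
  shows "2 * (\<Sum>h\<in>H. G h) \<le> of_nat (card H)"
proof -
  have "(\<Sum>h\<in>H. G h) = (\<Sum>h\<in>H. G (\<sigma> h))"
    by (rule sum.reindex_bij_witness[of _ \<sigma> \<sigma>]) (auto simp: \<sigma>)
  then have "2 * (\<Sum>h\<in>H. G h) = (\<Sum>h\<in>H. G h + G (\<sigma> h))"
    by (simp add: sum.distrib mult_2)
  also have "\<dots> \<le> (\<Sum>h\<in>H. 1)"
    by (intro sum_mono pair)
  finally show ?thesis by simp
qed

lemma card_unseen_blocks_ge:
  "real m - real n \<le> real (card {j\<in>{1..m}. \<forall>k<n. \<forall>i. \<xi> k \<noteq> A i j})"
proof -
  define T where "T = {j\<in>{1..m}. \<forall>k<n. \<forall>i. \<xi> k \<noteq> A i j}"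
  have "{1..m} - T \<subseteq> (\<lambda>k. case \<xi> k of Bot \<Rightarrow> 0 | A i j \<Rightarrow> j) ` {..<n}"
    by (force simp: T_def)
  then have "card ({1..m} - T) \<le> n"
    by (metis card_image_le card_lessThan card_mono finite_imageI finite_lessThan order_trans)
  moreover have T_sub: "T \<subseteq> {1..m}" by (auto simp: T_def)
  then have "card ({1..m} - T) = m - card T"
    by (simp add: card_Diff_subset finite_subset)
  moreover have "card T \<le> m" using card_mono[OF _ T_sub] by simp
  ultimately show ?thesis by (simp add: T_def)
qed

lemma sfun_flip_on_eq: "(\<And>i j. j \<in> T \<Longrightarrow> x \<noteq> A i j) \<Longrightarrow> sfun m (flip_on T h) x = sfun m h x"
  by (auto simp: sfun_def flip_on_def split: pt.splits)

lemma success_sum_le_half_card: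
  assumes m: "m > 0" and \<epsilon>: "\<epsilon> > 0" and n: "real n < (1 - 28 * \<epsilon>) * real m"
    and L_prob: "\<And>D. prob_space (L D)"
    and L_range: "\<And>D f. f \<in> space (L D) \<Longrightarrow> \<forall>x\<in>Xset m. f x \<in> {-1..1}"
  shows "2 * (\<Sum>h\<in>{1..m} \<rightarrow>\<^sub>E {-1, 1}. inner_prob (L (map (\<lambda>k. (\<xi> k, sfun m h (\<xi> k))) [0..<n]))
                 {f. MC_error (label_dist (muX_pmf m) (sfun m h)) (Xset m) (Bfam m) f \<le> \<epsilon>})
         \<le> of_nat (card ({1..m} \<rightarrow>\<^sub>E {-1, 1::real}))"
proof (rule sum_le_card_if_involution)
  define T where "T = {j\<in>{1..m}. \<forall>k<n. \<forall>i. \<xi> k \<noteq> A i j}"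
  have T: "T \<subseteq> {1..m}" by (auto simp: T_def)
  have "0 < \<epsilon> * real m" using \<epsilon> m by simp
  then have card_T: "12 * \<epsilon> * real m < real (card T)"
    using card_unseen_blocks_ge[of m n \<xi>] n by (simp add: T_def algebra_simps)
  fix h :: "nat \<Rightarrow> real" assume h: "h \<in> {1..m} \<rightarrow>\<^sub>E {-1, 1}"
  show "flip_on T h \<in> {1..m} \<rightarrow>\<^sub>E {-1, 1}" by (rule flip_on_PiE[OF h T])
  show "flip_on T (flip_on T h) = h" by simp
  let ?D = "map (\<lambda>k. (\<xi> k, sfun m h (\<xi> k))) [0..<n]"
  have same_sample: "map (\<lambda>k. (\<xi> k, sfun m (flip_on T h) (\<xi> k))) [0..<n] = ?D"
    by (auto simp: T_def intro!: map_cong sfun_flip_on_eq)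
  have "{f. MC_error (label_dist (muX_pmf m) (sfun m h)) (Xset m) (Bfam m) f \<le> \<epsilon>}
      \<inter> {f. MC_error (label_dist (muX_pmf m) (sfun m (flip_on T h))) (Xset m) (Bfam m) f \<le> \<epsilon>}
      \<inter> space (L ?D) = {}"
    using MC_error_flip_on_not_both_le[OF m h T L_range card_T] by blast
  then show "inner_prob (L ?D) {f. MC_error (label_dist (muX_pmf m) (sfun m h)) (Xset m) (Bfam m) f \<le> \<epsilon>}
      + inner_prob (L (map (\<lambda>k. (\<xi> k, sfun m (flip_on T h) (\<xi> k))) [0..<n]))
          {f. MC_error (label_dist (muX_pmf m) (sfun m (flip_on T h))) (Xset m) (Bfam m) f \<le> \<epsilon>} \<le> 1"
    unfolding same_sample by (rule inner_prob_add_disjoint_le_1[OF L_prob])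
qed (simp add: finite_PiE)

lemma not_MC_learner:
  assumes m: "m > 0" and \<epsilon>: "\<epsilon> > 0" and \<delta>: "\<delta> < 1/2" and n: "real n < (1 - 28 * \<epsilon>) * real m"
  shows "\<not> MC_learner (Xset m) (muX m) (Sfam m) (Bfam m) \<epsilon> \<delta> n L"
proof
  assume "MC_learner (Xset m) (muX m) (Sfam m) (Bfam m) \<epsilon> \<delta> n L"
  then have L_prob: "\<And>D. prob_space (L D)"
    and L_range: "\<And>D f. f \<in> space (L D) \<Longrightarrow> \<forall>x\<in>Xset m. f x \<in> {-1..1}"
    and success: "\<And>M. realizable_dist (Xset m) (muX m) (Sfam m) M \<Longrightarrow>
       ennreal (1 - \<delta>) \<le> (\<integral>\<^sup>+\<omega>. inner_prob (L (map \<omega> [0..<n])) {f. MC_error M (Xset m) (Bfam m) f \<le> \<epsilon>}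
              \<partial>PiM {..<n} (\<lambda>_. M))"
    unfolding MC_learner_def by blast+
  define H where "H = {1..m} \<rightarrow>\<^sub>E {-1, 1::real}"
  define \<Omega> where "\<Omega> = PiM {..<n} (\<lambda>_. measure_pmf (muX_pmf m))"
  define G where "G h \<xi> = inner_prob (L (map (\<lambda>k. (\<xi> k, sfun m h (\<xi> k))) [0..<n]))
      {f. MC_error (label_dist (muX_pmf m) (sfun m h)) (Xset m) (Bfam m) f \<le> \<epsilon>}" for h \<xi>
  interpret \<Omega>: prob_space \<Omega> unfolding \<Omega>_def by (intro prob_space_PiM measure_pmf.prob_space_axioms)
  have success_h: "ennreal (1 - \<delta>) \<le> (\<integral>\<^sup>+\<xi>. G h \<xi> \<partial>\<Omega>)" if "h \<in> H" for h
  proof -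
    have "realizable_dist (Xset m) (muX m) (Sfam m) (label_dist (muX_pmf m) (sfun m h))"
      using realizable_label_dist[OF set_pmf_muX_pmf[OF m], of "sfun m h" "Sfam m"] sfun_range that
      by (auto simp: pmf_muX_pmf[OF m] H_def Sfam_def)
    from success[OF this] show ?thesis
      unfolding G_def \<Omega>_def by (rule order_trans[OF _ nn_integral_PiM_label_dist_le])
  qed
  have "2 * (of_nat (card H) * ennreal (1 - \<delta>)) \<le> 2 * (\<Sum>h\<in>H. \<integral>\<^sup>+\<xi>. G h \<xi> \<partial>\<Omega>)"
    using sum_mono[of H "\<lambda>_. ennreal (1 - \<delta>)", OF success_h] by (intro mult_left_mono) auto
  also have "\<dots> = (\<integral>\<^sup>+\<xi>. 2 * (\<Sum>h\<in>H. G h \<xi>) \<partial>\<Omega>)"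
    unfolding \<Omega>_def
    by (simp add: nn_integral_sum nn_integral_cmult measurable_PiM_measure_pmf)
  also have "\<dots> \<le> (\<integral>\<^sup>+\<xi>. of_nat (card H) \<partial>\<Omega>)"
    using success_sum_le_half_card[OF m \<epsilon> n L_prob L_range]
    by (intro nn_integral_mono) (simp add: G_def H_def)
  also have "\<dots> = of_nat (card H)"
    by (simp add: \<Omega>.emeasure_space_1)
  finally have "ennreal (2 * (real (card H) * (1 - \<delta>))) \<le> ennreal (real (card H))"
    using \<delta> by (simp add: ennreal_mult' ennreal_of_nat_eq_real_of_nat)
  moreover have "card H > 0"
    unfolding H_def by (simp add: card_gt_0_iff finite_PiE PiE_eq_empty_iff)
  ultimately show False
    using \<delta> by (simp add: ennreal_le_iff algebra_simps)
qed

lemma numMC_le_if_learner: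
  "MC_learner Xs w S B \<epsilon> \<delta> n L \<Longrightarrow> numMC Xs w S B \<epsilon> \<delta> \<le> enat n"
  unfolding numMC_def MC_learnable_def by (rule INF_lower) blast

lemma numMC_ge_if_no_learner:
  assumes "\<And>n L. real n < k \<Longrightarrow> \<not> MC_learner Xs w S B \<epsilon> \<delta> n L"
  shows "enat (nat \<lceil>k\<rceil>) \<le> numMC Xs w S B \<epsilon> \<delta>"
  unfolding numMC_def MC_learnable_def
proof (rule INF_greatest)
  fix n assume "n \<in> {n. \<exists>L. MC_learner Xs w S B \<epsilon> \<delta> n L}"
  then have "k \<le> real n" using assms by force
  then show "enat (nat \<lceil>k\<rceil>) \<le> enat n" by (simp add: nat_le_iff ceiling_le_iff)
qed

theorem lemmaC4:
  shows "(\<exists>C>0. \<forall>m::nat. \<forall>\<epsilon> \<delta>::real. m > 0 \<and> 0 < \<epsilon> \<and> \<epsilon> < 1/2 \<and> 0 < \<delta> \<and> \<delta> < 1/2 \<longrightarrow>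
            numMC (Xset m) (muX m) (Bfam m) (Sfam m) \<epsilon> \<delta>
              \<le> enat (nat \<lceil>C / \<epsilon>^2 * log 2 (1 / \<delta>)\<rceil>))
       \<and> (\<forall>m::nat. \<forall>\<epsilon> \<delta>::real. m > 0 \<and> 0 < \<epsilon> \<and> \<epsilon> < 1/28 \<and> 0 < \<delta> \<and> \<delta> < 1/2 \<longrightarrow>
            enat (nat \<lceil>(1 - 28 * \<epsilon>) * real m\<rceil>) \<le> numMC (Xset m) (muX m) (Sfam m) (Bfam m) \<epsilon> \<delta>)"
proof (intro conjI exI[of _ "2::real"] allI impI)
  fix m :: nat and \<epsilon> \<delta> :: real
  assume "m > 0 \<and> 0 < \<epsilon> \<and> \<epsilon> < 1/2 \<and> 0 < \<delta> \<and> \<delta> < 1/2"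
  moreover have "2 / \<epsilon>^2 * log 2 (1 / \<delta>) \<le> real (nat \<lceil>2 / \<epsilon>^2 * log 2 (1 / \<delta>)\<rceil>)"
    by (rule real_nat_ceiling_ge)
  ultimately show "numMC (Xset m) (muX m) (Bfam m) (Sfam m) \<epsilon> \<delta> \<le> enat (nat \<lceil>2 / \<epsilon>^2 * log 2 (1 / \<delta>)\<rceil>)"
    by (intro numMC_le_if_learner[OF MC_learner_const_learner]) auto
next
  fix m :: nat and \<epsilon> \<delta> :: real
  assume "m > 0 \<and> 0 < \<epsilon> \<and> \<epsilon> < 1/28 \<and> 0 < \<delta> \<and> \<delta> < 1/2"
  then show "enat (nat \<lceil>(1 - 28 * \<epsilon>) * real m\<rceil>) \<le> numMC (Xset m) (muX m) (Sfam m) (Bfam m) \<epsilon> \<delta>"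
    by (intro numMC_ge_if_no_learner not_MC_learner) auto
qed simp

end
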